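(* There is an absolute constant $C>0$ such that for all $\varepsilon\in(0,1]$, $\gamma\in(0,1]$ and $n\ge C/(\gamma^2\varepsilon^2)$ there exists a symmetric private-coin $\varepsilon$-LDP protocol with $n$ users, each holding an i.i.d. sample from an unknown $p\in\Delta(\{0,1\}\times\{0,1\})$, whose curator outputs ``independent'' with probability at least $2/3$ if $p$ is a product distribution, and ``not independent'' with probability at least $2/3$ if $p$ is $\gamma$-far from every product distribution.
   Context: $d_{TV}(p,q)=\frac12\|p-q\|_1$. $p$ is a product distribution if $p(x_1,x_2)=p_1(x_1)p_2(x_2)$ for some distributions $p_1,p_2$ on $\{0,1\}$; $p$ is $\gamma$-far from product if $d_{TV}(p,q)>\gamma$ for every product $q$. Private-coin symmetric protocol: each user sends $Z_j\sim W(\cdot\mid X_j)$ for a single channel $W$ into a finite set, independently across users, and the curator outputs a possibly randomized function of $(Z_1,\dots,Z_n)$; $\varepsilon$-LDP means $W(z\mid x)\le e^\varepsilon W(z\mid x')$ for all $z,x,x'$. *)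

theory Defs
  imports "HOL-Probability.Probability"
begin

definition d_TV :: "'a pmf \<Rightarrow> 'a pmf \<Rightarrow> real" where
  "d_TV p q = (1/2) * (\<Sum>x\<in>set_pmf p \<union> set_pmf q. \<bar>pmf p x - pmf q x\<bar>)"

definition is_product :: "(bool \<times> bool) pmf \<Rightarrow> bool" where
  "is_product p \<longleftrightarrow> (\<exists>p1 p2 :: bool pmf. p = pair_pmf p1 p2)"

definition far_from_product :: "real \<Rightarrow> (bool \<times> bool) pmf \<Rightarrow> bool" where
  "far_from_product \<gamma> p \<longleftrightarrow> (\<forall>q. is_product q \<longrightarrow> d_TV p q > \<gamma>)"

definition finite_channel :: "('x \<Rightarrow> nat pmf) \<Rightarrow> bool" where
  "finite_channel W \<longleftrightarrow> finite (\<Union>x. set_pmf (W x))"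

definition is_LDP :: "real \<Rightarrow> ('x \<Rightarrow> nat pmf) \<Rightarrow> bool" where
  "is_LDP \<epsilon> W \<longleftrightarrow> (\<forall>z x x'. pmf (W x) z \<le> exp \<epsilon> * pmf (W x') z)"

text \<open>Symmetric private-coin protocol with n users: users j < n each hold an i.i.d. sample from p
  and independently send Z_j ~ W(.|X_j); the message vector (Z_0,...,Z_{n-1}) is a function on {..<n}
  (value 0 elsewhere); the curator A is a randomized function of it, True meaning "independent".\<close>

definition protocol_output :: "nat \<Rightarrow> ('x \<Rightarrow> nat pmf) \<Rightarrow> ((nat \<Rightarrow> nat) \<Rightarrow> bool pmf) \<Rightarrow> 'x pmf \<Rightarrow> bool pmf" where
  "protocol_output n W A p = bind_pmf (Pi_pmf {..<n} 0 (\<lambda>_. bind_pmf p W)) A"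

end

theory Submission
  imports Defs
begin

text \<open>Each user applies randomized response on the four-letter alphabet \<open>{0,1}\<^sup>2\<close>: with
  probability \<open>\<epsilon>/12\<close> the true pair, otherwise a uniform letter. The law of a message is then
  an explicit affine image of \<open>p\<close>, so suitably debiased empirical frequencies estimate
  \<open>p(1,1)\<close> and the two marginals \<open>p(1,\<cdot>)\<close>, \<open>p(\<cdot>,1)\<close>, hence the correlation
  \<open>\<delta> = p(1,1) - p(1,\<cdot>) p(\<cdot>,1)\<close>. Product distributions have \<open>\<delta> = 0\<close>, while the total
  variation distance from \<open>p\<close> to the product of its marginals is exactly \<open>2\<bar>\<delta>\<bar>\<close>, so a
  \<open>\<gamma>\<close>-far \<open>p\<close> has \<open>\<bar>\<delta>\<bar> > \<gamma>/2\<close>. By Hoeffding, \<open>n \<ge> C/(\<gamma>\<epsilon>)\<^sup>2\<close> users make all three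
  estimates accurate to \<open>\<gamma>/20\<close> with probability \<open>2/3\<close>, and thresholding the estimate of
  \<open>\<bar>\<delta>\<bar>\<close> at \<open>\<gamma>/4\<close> separates the two cases.\<close>

definition frequency :: "nat \<Rightarrow> 'a set \<Rightarrow> (nat \<Rightarrow> 'a) \<Rightarrow> real" where
  "frequency n S f = (\<Sum>i<n. indicator S (f i)) / n"

lemma prob_Pi_pmf_frequency_deviation:
  fixes D :: "'a pmf"
  assumes "n > 0" and "t \<ge> 0"
  shows "measure_pmf.prob (Pi_pmf {..<n} d (\<lambda>_. D))
           {f. t \<le> \<bar>frequency n S f - measure_pmf.prob D S\<bar>} \<le> 2 * exp (-2 * real n * t\<^sup>2)"
proof -
  define M where "M = Pi_pmf {..<n} d (\<lambda>_. D)"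
  have indep: "prob_space.indep_vars (measure_pmf M) (\<lambda>_. borel) (\<lambda>i f. indicator S (f i) :: real) {..<n}"
    unfolding M_def
    by (rule prob_space.indep_vars_compose2[OF measure_pmf.prob_space_axioms indep_vars_Pi_pmf]) auto
  interpret Hoeffding_ineq "measure_pmf M" "{..<n}" "\<lambda>i f. indicator S (f i) :: real" "\<lambda>_. 0" "\<lambda>_. 1"
     "\<Sum>i<n. measure_pmf.expectation M (\<lambda>f. indicator S (f i))"
    by unfold_locales (use indep in auto)
  have "measure_pmf.expectation M (\<lambda>f. indicator S (f i)) = measure_pmf.prob D S" if "i < n" for i
  proof -
    have "map_pmf (\<lambda>f. f i) M = D"
      unfolding M_def using that by (subst Pi_pmf_component) auto
    then show ?thesis
      using integral_map_pmf[of "\<lambda>f. f i" M "indicator S :: 'a \<Rightarrow> real"] by simp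
  qed
  then have mean: "(\<Sum>i<n. measure_pmf.expectation M (\<lambda>f. indicator S (f i))) = real n * measure_pmf.prob D S"
    by simp
  have "measure_pmf.prob M {f. real n * t \<le> \<bar>(\<Sum>i<n. indicator S (f i)) - real n * measure_pmf.prob D S\<bar>}
      \<le> 2 * exp (-2 * real n * t\<^sup>2)"
    using Hoeffding_ineq_abs_ge[of "real n * t"] assms unfolding mean
    by (simp add: power2_eq_square mult.assoc mult.left_commute)
  moreover have "real n * t \<le> \<bar>(\<Sum>i<n. indicator S (f i)) - real n * measure_pmf.prob D S\<bar>
      \<longleftrightarrow> t \<le> \<bar>frequency n S f - measure_pmf.prob D S\<bar>" for f
  proof -
    have "(\<Sum>i<n. indicator S (f i)) - real n * measure_pmf.prob D S
        = real n * (frequency n S f - measure_pmf.prob D S)"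
      using assms(1) by (simp add: frequency_def algebra_simps)
    then show ?thesis
      using assms(1) by (simp add: abs_mult)
  qed
  ultimately show ?thesis
    unfolding M_def by simp
qed

definition encode :: "bool \<times> bool \<Rightarrow> nat" where
  "encode x = (if fst x then 2 else 0) + (if snd x then 1 else 0)"

definition randomized_response :: "real \<Rightarrow> bool \<times> bool \<Rightarrow> nat pmf" where
  "randomized_response r x =
     bind_pmf (bernoulli_pmf r) (\<lambda>b. if b then return_pmf (encode x) else pmf_of_set {..<4})"

lemma encode_less_4: "encode x < 4"
  by (auto simp: encode_def)

lemma lessThan_4_nonempty: "{..<4::nat} \<noteq> {}"
  by (metis lessThan_empty_iff zero_neq_numeral)

lemma pmf_uniform_4: "pmf (pmf_of_set {..<4::nat}) z = (if z < 4 then 1/4 else 0)"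
  using lessThan_4_nonempty by (simp add: indicator_def)

lemma pmf_bind_randomized_response:
  assumes "0 \<le> r" "r \<le> 1"
  shows "pmf (bind_pmf p (randomized_response r)) z
       = r * pmf (map_pmf encode p) z + (1 - r) * pmf (pmf_of_set {..<4}) z"
proof -
  have "bind_pmf p (randomized_response r)
      = bind_pmf (bernoulli_pmf r) (\<lambda>b. if b then map_pmf encode p else pmf_of_set {..<4})"
    unfolding randomized_response_def map_pmf_def
    by (subst bind_commute_pmf) (auto intro: bind_pmf_cong)
  then show ?thesis
    using assms by (simp add: pmf_bind)
qed

lemma pmf_randomized_response:
  assumes "0 \<le> r" "r \<le> 1"
  shows "pmf (randomized_response r x) z
       = (if z = encode x then r else 0) + (if z < 4 then (1 - r) / 4 else 0)"
  using pmf_bind_randomized_response[OF assms, of "return_pmf x" z] assms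
  by (simp add: bind_return_pmf pmf_uniform_4 indicator_def)

lemma finite_channel_randomized_response:
  assumes "0 \<le> r" "r \<le> 1"
  shows "finite_channel (randomized_response r)"
  unfolding finite_channel_def
  by (rule finite_subset[of _ "{..<4}"])
     (use assms encode_less_4 in \<open>auto simp: set_pmf_iff pmf_randomized_response split: if_splits\<close>)

lemma is_LDP_randomized_response:
  assumes "0 \<le> r" "r \<le> 1" and "r + (1 - r) / 4 \<le> exp \<epsilon> * ((1 - r) / 4)"
  shows "is_LDP \<epsilon> (randomized_response r)"
  unfolding is_LDP_def
proof (intro allI)
  fix z x x'
  show "pmf (randomized_response r x) z \<le> exp \<epsilon> * pmf (randomized_response r x') z"
  proof (cases "z < 4")
    case True
    have "pmf (randomized_response r x) z \<le> r + (1 - r) / 4"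
      using assms True by (simp add: pmf_randomized_response)
    also have "\<dots> \<le> exp \<epsilon> * ((1 - r) / 4)"
      by (fact assms(3))
    also have "\<dots> \<le> exp \<epsilon> * pmf (randomized_response r x') z"
      using assms True by (intro mult_left_mono) (auto simp: pmf_randomized_response)
    finally show ?thesis .
  next
    case False
    then show ?thesis
      using assms encode_less_4[of x] by (simp add: pmf_randomized_response)
  qed
qed

lemma measure_bind_randomized_response:
  assumes "0 \<le> r" "r \<le> 1" and "S \<subseteq> {..<4}"
  shows "measure_pmf.prob (bind_pmf p (randomized_response r)) S
       = r * measure_pmf.prob p (encode -` S) + (1 - r) * card S / 4"
proof -
  have fin: "finite S"
    using assms(3) finite_subset by blast
  have "measure_pmf.prob (bind_pmf p (randomized_response r)) S
      = (\<Sum>z\<in>S. r * pmf (map_pmf encode p) z + (1 - r) * pmf (pmf_of_set {..<4}) z)"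
    using assms fin by (simp add: measure_measure_pmf_finite pmf_bind_randomized_response)
  also have "\<dots> = r * measure_pmf.prob (map_pmf encode p) S
                 + (1 - r) * measure_pmf.prob (pmf_of_set {..<4::nat}) S"
    by (simp only: measure_measure_pmf_finite[OF fin] sum.distrib sum_distrib_left)
  also have "measure_pmf.prob (pmf_of_set {..<4::nat}) S = card S / 4"
    using assms(3) lessThan_4_nonempty by (simp add: measure_pmf_of_set Int_absorb1)
  finally show ?thesis
    by simp
qed

definition correlation :: "(bool \<times> bool) pmf \<Rightarrow> real" where
  "correlation p = pmf p (True, True) - pmf (map_pmf fst p) True * pmf (map_pmf snd p) True"

lemma correlation_pair_pmf: "correlation (pair_pmf p1 p2) = 0"
  by (simp add: correlation_def map_fst_pair_pmf map_snd_pair_pmf pmf_pair)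

lemma correlation_eq_0_if_product: "is_product p \<Longrightarrow> correlation p = 0"
  unfolding is_product_def using correlation_pair_pmf by blast

lemma sum_UNIV_bool_pair:
  "(\<Sum>x\<in>UNIV. g x) = g (True, True) + g (True, False) + g (False, True) + g (False, False)"
proof -
  have UNIV_eq: "(UNIV :: (bool \<times> bool) set) = {(True, True), (True, False), (False, True), (False, False)}"
    by auto
  show ?thesis
    by (simp only: UNIV_eq) (simp add: add.assoc)
qed

lemma pmf_map_fst_bool: "pmf (map_pmf fst p) a = pmf p (a, True) + pmf p (a, False)"
proof -
  have "fst -` {a} = {(a, True), (a, False)}"
    by auto
  then show ?thesis
    by (simp add: pmf_map measure_measure_pmf_finite)
qed

lemma pmf_map_snd_bool: "pmf (map_pmf snd p) b = pmf p (True, b) + pmf p (False, b)"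
proof -
  have "snd -` {b} = {(True, b), (False, b)}"
    by auto
  then show ?thesis
    by (simp add: pmf_map measure_measure_pmf_finite)
qed

lemma d_TV_product_of_marginals:
  "d_TV p (pair_pmf (map_pmf fst p) (map_pmf snd p)) = 2 * \<bar>correlation p\<bar>"
proof -
  define q where "q = pair_pmf (map_pmf fst p) (map_pmf snd p)"
  have "d_TV p q = (1/2) * (\<Sum>x\<in>UNIV. \<bar>pmf p x - pmf q x\<bar>)"
    unfolding d_TV_def
    by (intro arg_cong[where f = "\<lambda>s. (1/2) * s"] sum.mono_neutral_left) (auto simp: set_pmf_iff)
  also have "\<dots> = 2 * \<bar>correlation p\<bar>"
  proof -
    have ff: "pmf p (False, False) = 1 - pmf p (True, True) - pmf p (True, False) - pmf p (False, True)"
      using sum_pmf_eq_1[of UNIV p] by (simp add: sum_UNIV_bool_pair)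
    show ?thesis
      unfolding sum_UNIV_bool_pair q_def pmf_pair pmf_map_fst_bool pmf_map_snd_bool correlation_def ff
      by (simp add: algebra_simps abs_minus_commute)
  qed
  finally show ?thesis
    unfolding q_def .
qed

lemma far_from_product_correlation:
  assumes "far_from_product \<gamma> p"
  shows "\<gamma> < 2 * \<bar>correlation p\<bar>"
proof -
  have "is_product (pair_pmf (map_pmf fst p) (map_pmf snd p))"
    unfolding is_product_def by blast
  then show ?thesis
    using assms d_TV_product_of_marginals unfolding far_from_product_def by metis
qed

text \<open>Inverts the affine relation of \<open>measure_bind_randomized_response\<close>.\<close>

definition debiased_frequency :: "real \<Rightarrow> nat \<Rightarrow> nat set \<Rightarrow> (nat \<Rightarrow> nat) \<Rightarrow> real" where
  "debiased_frequency r n S f = (frequency n S f - (1 - r) * card S / 4) / r"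

definition correlation_estimate :: "real \<Rightarrow> nat \<Rightarrow> (nat \<Rightarrow> nat) \<Rightarrow> real" where
  "correlation_estimate r n f =
     debiased_frequency r n {3} f - debiased_frequency r n {2, 3} f * debiased_frequency r n {1, 3} f"

lemma debiased_frequency_close:
  assumes "0 < r" "r \<le> 1" "S \<subseteq> {..<4}"
    and "\<bar>frequency n S f - measure_pmf.prob (bind_pmf p (randomized_response r)) S\<bar> < r * \<eta>"
  shows "\<bar>debiased_frequency r n S f - measure_pmf.prob p (encode -` S)\<bar> < \<eta>"
proof -
  have "frequency n S f - measure_pmf.prob (bind_pmf p (randomized_response r)) S
      = r * (debiased_frequency r n S f - measure_pmf.prob p (encode -` S))"
    using assms by (simp add: measure_bind_randomized_response debiased_frequency_def field_simps)
  then show ?thesis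
    using assms by (simp add: abs_mult)
qed

lemma encode_vimage_3: "encode -` {3} = {(True, True)}"
  by (simp add: set_eq_iff encode_def)

lemma encode_vimage_2_3: "encode -` {2, 3} = fst -` {True}"
  by (simp add: set_eq_iff encode_def)

lemma encode_vimage_1_3: "encode -` {1, 3} = snd -` {True}"
  by (simp add: set_eq_iff encode_def)

lemma abs_diff_minus_product_less:
  fixes a b c x y z e :: real
  assumes "\<bar>a - x\<bar> < e" "\<bar>b - y\<bar> < e" "\<bar>c - z\<bar> < e"
    and "0 \<le> y" "y \<le> 1" "0 \<le> z" "z \<le> 1" "e \<le> 1"
  shows "\<bar>(a - b * c) - (x - y * z)\<bar> < 4 * e"
proof -
  have "\<bar>c\<bar> \<le> 2"
    using assms by linarith
  have decomp: "b * c - y * z = (b - y) * c + y * (c - z)"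
    by (simp add: algebra_simps)
  have "\<bar>b * c - y * z\<bar> \<le> \<bar>b - y\<bar> * \<bar>c\<bar> + \<bar>y\<bar> * \<bar>c - z\<bar>"
    using abs_triangle_ineq[of "(b - y) * c" "y * (c - z)"] unfolding decomp abs_mult .
  also have "\<dots> \<le> e * 2 + 1 * e"
    using assms \<open>\<bar>c\<bar> \<le> 2\<close> by (intro add_mono mult_mono) auto
  finally show ?thesis
    using assms by linarith
qed

lemma two_exp_le_one_ninth:
  fixes x :: real
  assumes "9 \<le> x"
  shows "2 * exp (-2 * x) \<le> 1/9"
proof -
  have "exp (-2 * x) \<le> exp (-18)"
    using assms by simp
  also have "exp (-18 :: real) = 1 / exp 18"
    by (simp add: exp_minus divide_inverse)
  also have "\<dots> \<le> 1 / 19"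
    using exp_ge_add_one_self[of 18] by (intro divide_left_mono) auto
  finally show ?thesis
    by simp
qed

lemma correlation_estimate_close:
  assumes r: "0 < r" "r \<le> 1" and "\<eta> \<le> 1"
    and freq: "\<And>S. S \<in> {{3}, {2, 3}, {1, 3}} \<Longrightarrow>
      \<bar>frequency n S f - measure_pmf.prob (bind_pmf p (randomized_response r)) S\<bar> < r * \<eta>"
  shows "\<bar>correlation_estimate r n f - correlation p\<bar> < 4 * \<eta>"
proof -
  have close: "\<bar>debiased_frequency r n S f - measure_pmf.prob p (encode -` S)\<bar> < \<eta>"
    if "S \<in> {{3}, {2, 3}, {1, 3}}" for S
    using that r freq[OF that] by (intro debiased_frequency_close) auto
  have c3: "\<bar>debiased_frequency r n {3} f - pmf p (True, True)\<bar> < \<eta>"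
    using close[of "{3}"] unfolding encode_vimage_3 measure_pmf_single by simp
  have c23: "\<bar>debiased_frequency r n {2, 3} f - pmf (map_pmf fst p) True\<bar> < \<eta>"
    using close[of "{2, 3}"] unfolding encode_vimage_2_3 pmf_map by simp
  have c13: "\<bar>debiased_frequency r n {1, 3} f - pmf (map_pmf snd p) True\<bar> < \<eta>"
    using close[of "{1, 3}"] unfolding encode_vimage_1_3 pmf_map by simp
  show ?thesis
    unfolding correlation_estimate_def correlation_def
    by (rule abs_diff_minus_product_less[OF c3 c23 c13]) (use \<open>\<eta> \<le> 1\<close> in \<open>simp_all add: pmf_le_1\<close>)
qed

lemma prob_correlation_estimate_inaccurate:
  assumes r: "0 < r" "r \<le> 1" and \<eta>: "0 < \<eta>" "\<eta> \<le> 1" and n: "9 \<le> real n * r\<^sup>2 * \<eta>\<^sup>2"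
  shows "measure_pmf.prob (Pi_pmf {..<n} d (\<lambda>_. bind_pmf p (randomized_response r)))
           {f. 4 * \<eta> \<le> \<bar>correlation_estimate r n f - correlation p\<bar>} \<le> 1/3"
proof -
  define D where "D = bind_pmf p (randomized_response r)"
  define M where "M = Pi_pmf {..<n} d (\<lambda>_. D)"
  define Bad where "Bad S = {f. r * \<eta> \<le> \<bar>frequency n S f - measure_pmf.prob D S\<bar>}" for S
  have "n > 0"
    using n by (cases n) auto
  have Bad_small: "measure_pmf.prob M (Bad S) \<le> 1/9" for S
  proof -
    have "measure_pmf.prob M (Bad S) \<le> 2 * exp (-2 * real n * (r * \<eta>)\<^sup>2)"
      unfolding M_def Bad_def D_def
      by (rule prob_Pi_pmf_frequency_deviation) (use \<open>n > 0\<close> r \<eta> in auto)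
    also have "\<dots> = 2 * exp (-2 * (real n * r\<^sup>2 * \<eta>\<^sup>2))"
      by (simp add: power_mult_distrib)
    also have "\<dots> \<le> 1/9"
      using n by (rule two_exp_le_one_ninth)
    finally show ?thesis .
  qed
  have "{f. 4 * \<eta> \<le> \<bar>correlation_estimate r n f - correlation p\<bar>} \<subseteq> Bad {3} \<union> Bad {2, 3} \<union> Bad {1, 3}"
  proof
    fix f
    assume "f \<in> {f. 4 * \<eta> \<le> \<bar>correlation_estimate r n f - correlation p\<bar>}"
    then have "\<not> \<bar>correlation_estimate r n f - correlation p\<bar> < 4 * \<eta>"
      by simp
    then show "f \<in> Bad {3} \<union> Bad {2, 3} \<union> Bad {1, 3}"
      using correlation_estimate_close[OF r \<eta>(2), of n f p] unfolding Bad_def D_def by force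
  qed
  then have "measure_pmf.prob M {f. 4 * \<eta> \<le> \<bar>correlation_estimate r n f - correlation p\<bar>}
      \<le> measure_pmf.prob M (Bad {3} \<union> Bad {2, 3} \<union> Bad {1, 3})"
    by (intro measure_pmf.finite_measure_mono) auto
  also have "\<dots> \<le> measure_pmf.prob M (Bad {3}) + measure_pmf.prob M (Bad {2, 3}) + measure_pmf.prob M (Bad {1, 3})"
    by (intro order_trans[OF measure_Un_le add_right_mono[OF measure_Un_le]]) auto
  also have "\<dots> \<le> 1/3"
    using Bad_small[of "{3}"] Bad_small[of "{2, 3}"] Bad_small[of "{1, 3}"] by simp
  finally show ?thesis
    unfolding M_def D_def .
qed

lemma pmf_protocol_output_deterministic_ge:
  assumes "measure_pmf.prob (Pi_pmf {..<n} 0 (\<lambda>_. bind_pmf p W)) {f. g f \<noteq> b} \<le> \<delta>"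
  shows "1 - \<delta> \<le> pmf (protocol_output n W (\<lambda>f. return_pmf (g f)) p) b"
proof -
  define M where "M = Pi_pmf {..<n} 0 (\<lambda>_. bind_pmf p W)"
  have "pmf (protocol_output n W (\<lambda>f. return_pmf (g f)) p) b = measure_pmf.prob M {f. g f = b}"
    unfolding protocol_output_def M_def map_pmf_def[symmetric] by (simp add: pmf_map vimage_def)
  also have "{f. g f = b} = space M - {f. g f \<noteq> b}"
    by auto
  also have "measure_pmf.prob M \<dots> = 1 - measure_pmf.prob M {f. g f \<noteq> b}"
    by (rule measure_pmf.prob_compl) simp
  finally show ?thesis
    using assms unfolding M_def by simp
qed

lemma is_LDP_randomized_response_twelfth:
  fixes \<epsilon> :: real
  assumes "0 \<le> \<epsilon>" "\<epsilon> \<le> 1"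
  shows "is_LDP \<epsilon> (randomized_response (\<epsilon>/12))"
proof (rule is_LDP_randomized_response)
  have "\<epsilon> * \<epsilon> \<le> \<epsilon> * 8"
    using assms by (intro mult_left_mono) auto
  then have "\<epsilon>/12 + (1 - \<epsilon>/12) / 4 \<le> (1 + \<epsilon>) * ((1 - \<epsilon>/12) / 4)"
    by (simp add: field_simps)
  also have "\<dots> \<le> exp \<epsilon> * ((1 - \<epsilon>/12) / 4)"
    using assms exp_ge_add_one_self[of \<epsilon>] by (intro mult_right_mono) auto
  finally show "\<epsilon>/12 + (1 - \<epsilon>/12) / 4 \<le> exp \<epsilon> * ((1 - \<epsilon>/12) / 4)" .
qed (use assms in auto)

lemma pmf_correlation_test_correct:
  assumes "0 < r" "r \<le> 1" "0 < \<eta>" "\<eta> \<le> 1" "9 \<le> real n * r\<^sup>2 * \<eta>\<^sup>2"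
    and correct: "\<And>f. \<bar>correlation_estimate r n f - correlation p\<bar> < 4 * \<eta> \<Longrightarrow> g f = b"
  shows "2/3 \<le> pmf (protocol_output n (randomized_response r) (\<lambda>f. return_pmf (g f)) p) b"
proof -
  define M where "M = Pi_pmf {..<n} 0 (\<lambda>_. bind_pmf p (randomized_response r))"
  have "{f. g f \<noteq> b} \<subseteq> {f. 4 * \<eta> \<le> \<bar>correlation_estimate r n f - correlation p\<bar>}"
    using correct by force
  then have "measure_pmf.prob M {f. g f \<noteq> b}
      \<le> measure_pmf.prob M {f. 4 * \<eta> \<le> \<bar>correlation_estimate r n f - correlation p\<bar>}"
    by (intro measure_pmf.finite_measure_mono) auto
  also have "\<dots> \<le> 1/3"
    unfolding M_def using assms by (intro prob_correlation_estimate_inaccurate)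
  finally have "1 - 1/3 \<le> pmf (protocol_output n (randomized_response r) (\<lambda>f. return_pmf (g f)) p) b"
    unfolding M_def by (rule pmf_protocol_output_deterministic_ge)
  then show ?thesis
    by simp
qed

theorem corollary2p8:
  shows "\<exists>C>0. \<forall>(\<epsilon>::real) (\<gamma>::real) (n::nat).
           0 < \<epsilon> \<and> \<epsilon> \<le> 1 \<and> 0 < \<gamma> \<and> \<gamma> \<le> 1 \<and> real n \<ge> C / (\<gamma>^2 * \<epsilon>^2) \<longrightarrow>
           (\<exists>(W :: bool \<times> bool \<Rightarrow> nat pmf) (A :: (nat \<Rightarrow> nat) \<Rightarrow> bool pmf).
              finite_channel W \<and> is_LDP \<epsilon> W \<and>
              (\<forall>p. is_product p \<longrightarrow> pmf (protocol_output n W A p) True \<ge> 2/3) \<and>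
              (\<forall>p. far_from_product \<gamma> p \<longrightarrow> pmf (protocol_output n W A p) False \<ge> 2/3))"
  \<comment> \<open>\<open>518400 = 9 \<cdot> 12\<^sup>2 \<cdot> 20\<^sup>2\<close>: Hoeffding is applied with \<open>r = \<epsilon>/12\<close> and accuracy \<open>\<eta> = \<gamma>/20\<close>.\<close>
proof (intro exI[of _ "518400 :: real"] conjI allI impI)
  fix \<epsilon> \<gamma> :: real and n :: nat
  assume "0 < \<epsilon> \<and> \<epsilon> \<le> 1 \<and> 0 < \<gamma> \<and> \<gamma> \<le> 1 \<and> real n \<ge> 518400 / (\<gamma>^2 * \<epsilon>^2)"
  then have \<epsilon>: "0 < \<epsilon>" "\<epsilon> \<le> 1" and \<gamma>: "0 < \<gamma>" "\<gamma> \<le> 1"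
    and "518400 \<le> real n * (\<gamma>^2 * \<epsilon>^2)"
    by (auto simp: pos_divide_le_eq)
  then have n: "9 \<le> real n * (\<epsilon>/12)\<^sup>2 * (\<gamma>/20)\<^sup>2"
    by (simp add: power_divide field_simps)
  have test: "2/3 \<le> pmf (protocol_output n (randomized_response (\<epsilon>/12)) (\<lambda>f. return_pmf (g f)) p) b"
    if "\<And>f. \<bar>correlation_estimate (\<epsilon>/12) n f - correlation p\<bar> < 4 * (\<gamma>/20) \<Longrightarrow> g f = b" for g p b
    using \<epsilon> \<gamma> n that by (intro pmf_correlation_test_correct[of "\<epsilon>/12" "\<gamma>/20"]) auto
  define decide where "decide f \<longleftrightarrow> \<bar>correlation_estimate (\<epsilon>/12) n f\<bar> < \<gamma>/4" for f
  show "\<exists>W A. finite_channel W \<and> is_LDP \<epsilon> W \<and>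
          (\<forall>p. is_product p \<longrightarrow> pmf (protocol_output n W A p) True \<ge> 2/3) \<and>
          (\<forall>p. far_from_product \<gamma> p \<longrightarrow> pmf (protocol_output n W A p) False \<ge> 2/3)"
  proof (intro exI[of _ "randomized_response (\<epsilon>/12)"] exI[of _ "\<lambda>f. return_pmf (decide f)"] conjI allI impI)
    show "finite_channel (randomized_response (\<epsilon>/12))" "is_LDP \<epsilon> (randomized_response (\<epsilon>/12))"
      using \<epsilon> by (simp_all add: finite_channel_randomized_response is_LDP_randomized_response_twelfth)
  next
    fix p
    assume "is_product p"
    then have "correlation p = 0"
      by (rule correlation_eq_0_if_product)
    then show "2/3 \<le> pmf (protocol_output n (randomized_response (\<epsilon>/12)) (\<lambda>f. return_pmf (decide f)) p) True"
      by (intro test) (auto simp: decide_def)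
  next
    fix p
    assume "far_from_product \<gamma> p"
    then have "\<gamma> < 2 * \<bar>correlation p\<bar>"
      by (rule far_from_product_correlation)
    then show "2/3 \<le> pmf (protocol_output n (randomized_response (\<epsilon>/12)) (\<lambda>f. return_pmf (decide f)) p) False"
      by (intro test) (auto simp: decide_def abs_if split: if_splits)
  qed
qed simp

end
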